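(* Assume that for every $y\in\mathcal Y$ the map $u\mapsto\ell(y,u)$ is convex and twice continuously differentiable, and that for every $y$ the map $u\mapsto s(y,u)$ is $\gamma$-Lipschitz continuous for some $\gamma\in(0,\infty)$. Then for every $y\in\mathcal Y$, $$|S_{\lambda;D^y}(X_i,Y_i)-\tilde S_{\lambda;D^y}(X_i,Y_i)|\le\tau^{(1)}_{\lambda;i}(y)\ (1\le i\le n),\qquad |S_{\lambda;D^y}(X_{n+1},y)-\tilde S_{\lambda;D^y}(X_{n+1},y)|\le\tau^{(1)}_{\lambda;n+1}(y),$$ where for every $i\in\{1,\dots,n+1\}$, $\tau^{(1)}_{\lambda;i}(y)=\sqrt{K_{i,i}}\sqrt{K_{n+1,n+1}}\frac{\gamma\rho^{(1)}_\lambda(y)}{\lambda(n+1)}$ with $\rho^{(1)}_\lambda(y)=\frac12\big|-\partial_2\ell(z,\hat f_{\lambda;D^z}(X_{n+1}))+\partial_2\ell(y,\hat f_{\lambda;D^z}(X_{n+1}))\big|$.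
   Context: Let $\mathcal X\subset\mathbb R^d$, $\mathcal Y\subset\mathbb R$, $D=\{(X_1,Y_1),\dots,(X_n,Y_n)\}$ i.i.d. with distribution $P$ on $\mathcal X\times\mathcal Y$, $(X_{n+1},Y_{n+1})\sim P$ independent. For $y\in\mathcal Y$, $D^y=D\cup\{(X_{n+1},y)\}$. $\mathcal H$ is an RKHS of functions $\mathcal X\to\mathbb R$ with kernel $\kappa_{\mathcal H}$; $K=(\kappa_{\mathcal H}(X_i,X_j))_{1\le i,j\le n+1}$. For a loss $\ell$ and $\lambda>0$, $\hat f_{\lambda;D^y}$ minimizes $\frac1{n+1}\sum_{(x,y')\in D^y}\ell(y',f(x))+\lambda\|f\|^2_{\mathcal H}$ over $\mathcal H$. For $s:\mathcal Y\times\mathcal Y\to\mathbb R_+$: $S_{\lambda;D^y}(X_i,Y_i)=s(Y_i,\hat f_{\lambda;D^y}(X_i))$ ($i\le n$), $S_{\lambda;D^y}(X_{n+1},y)=s(y,\hat f_{\lambda;D^y}(X_{n+1}))$. A point $z\in\mathcal Y$ is fixed and $\tilde S_{\lambda;D^y}(X_i,Y_i)=s(Y_i,\hat f_{\lambda;D^z}(X_i))$ ($i\le n$), $\tilde S_{\lambda;D^y}(X_{n+1},y)=s(y,\hat f_{\lambda;D^z}(X_{n+1}))$. $\partial_2\ell$ is the derivative in the second argument. *)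

theory Defs
  imports "HOL-Analysis.Analysis"
begin

text \<open>An RKHS H of functions on a set Xs is represented by a real Hilbert space type 'h
 together with the canonical feature map kx (kx x is the representer of evaluation at x).
 An element f of 'h is the function (\<lambda>x. f \<bullet> kx x); the density condition makes this
 identification injective, so 'h is exactly a Hilbert space of functions on Xs with
 reproducing kernel kappa x x' = kx x \<bullet> kx x'.\<close>
definition rkhs_feature :: "'x set \<Rightarrow> ('x \<Rightarrow> 'h::{real_inner,complete_space}) \<Rightarrow> bool" where
  "rkhs_feature Xs kx \<longleftrightarrow> (\<forall>f. (\<forall>x\<in>Xs. f \<bullet> kx x = 0) \<longrightarrow> f = 0)"

definition rkhs_eval :: "('x \<Rightarrow> 'h::real_inner) \<Rightarrow> 'h \<Rightarrow> 'x \<Rightarrow> real" where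
  "rkhs_eval kx f x = f \<bullet> kx x"

definition kern :: "('x \<Rightarrow> 'h::real_inner) \<Rightarrow> 'x \<Rightarrow> 'x \<Rightarrow> real" where
  "kern kx x x' = kx x \<bullet> kx x'"

text \<open>Regularized empirical risk on the augmented data set D^y = D \<union> {(X (n+1), y)},
 data indexed by 1..n.\<close>
definition reg_risk ::
  "(real \<Rightarrow> real \<Rightarrow> real) \<Rightarrow> real \<Rightarrow> ('x \<Rightarrow> 'h::real_inner) \<Rightarrow> nat \<Rightarrow> (nat \<Rightarrow> 'x) \<Rightarrow> (nat \<Rightarrow> real)
    \<Rightarrow> real \<Rightarrow> 'h \<Rightarrow> real" where
  "reg_risk loss lam kx n X Y y f =
     (1 / real (n+1)) * ((\<Sum>i=1..n. loss (Y i) (rkhs_eval kx f (X i))) + loss y (rkhs_eval kx f (X (n+1))))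
     + lam * (norm f)\<^sup>2"

definition is_minimizer :: "('h \<Rightarrow> real) \<Rightarrow> 'h \<Rightarrow> bool" where
  "is_minimizer F f \<longleftrightarrow> (\<forall>g. F f \<le> F g)"

definition C2 :: "(real \<Rightarrow> real) \<Rightarrow> bool" where
  "C2 g \<longleftrightarrow> (\<exists>g' g''. (\<forall>u. (g has_real_derivative g' u) (at u))
                    \<and> (\<forall>u. (g' has_real_derivative g'' u) (at u))
                    \<and> continuous_on UNIV g'')"

definition d2 :: "(real \<Rightarrow> real \<Rightarrow> real) \<Rightarrow> real \<Rightarrow> real \<Rightarrow> real" where
  "d2 loss y u = deriv (\<lambda>v. loss y v) u"

end

theory Submission
  imports Defs
begin

text \<open>Perturbing a minimiser of the regularised risk along a direction and differentiating at 0
 gives the first-order condition. Taking it for the minimisers fy (label y) and fz (label z) in the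
 direction fy - fz and subtracting, the terms of the common data points are nonnegative because the
 derivative of a convex loss is monotone; what remains is
 2 lam (n+1) norm (fy - fz)^2 \<le> (d2 loss z - d2 loss y) (fz(X (n+1))) * (fy - fz)(X (n+1)).
 By Cauchy-Schwarz, |f x| \<le> norm f * sqrt (K x x), so norm (fy - fz) \<le> \<rho> sqrt (K (n+1) (n+1)) / (lam (n+1)),
 and the Lipschitz continuity of s transfers this bound to the scores.\<close>

lemma C2_has_real_derivative_d2:
  assumes "C2 (loss y)"
  shows "(loss y has_real_derivative d2 loss y u) (at u)"
proof -
  from assms obtain g' where g': "\<And>u. (loss y has_real_derivative g' u) (at u)"
    unfolding C2_def by blast
  with DERIV_imp_deriv[OF g'] show ?thesis
    unfolding d2_def by simp
qed

lemma convex_on_derivative_monotone: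
  fixes g :: "real \<Rightarrow> real"
  assumes convex: "convex_on UNIV g" and deriv: "\<And>u. (g has_real_derivative g' u) (at u)"
  shows "(g' a - g' b) * (a - b) \<ge> 0"
proof -
  have "g a - g b \<ge> g' b * (a - b)"
    by (rule convex_on_imp_above_tangent[OF convex]) (use deriv in auto)
  moreover have "g b - g a \<ge> g' a * (b - a)"
    by (rule convex_on_imp_above_tangent[OF convex]) (use deriv in auto)
  ultimately show ?thesis
    by (simp add: algebra_simps)
qed

lemma is_minimizer_directional_derivative_eq_0:
  fixes F :: "'a::real_vector \<Rightarrow> real"
  assumes "is_minimizer F f" and "((\<lambda>t. F (f + t *\<^sub>R d)) has_real_derivative D) (at 0)"
  shows "D = 0"
proof -
  have "\<forall>t. \<bar>0 - t\<bar> < 1 \<longrightarrow> F (f + 0 *\<^sub>R d) \<le> F (f + t *\<^sub>R d)"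
    using assms(1) unfolding is_minimizer_def by simp
  from DERIV_local_min[OF assms(2) zero_less_one this] show ?thesis .
qed

lemma reg_risk_directional_derivative:
  fixes kx :: "'x \<Rightarrow> 'h::real_inner"
  assumes deriv: "\<And>y' u. y' \<in> insert w (Y ` {1..n}) \<Longrightarrow> (loss y' has_real_derivative L y' u) (at u)"
  shows "((\<lambda>t. reg_risk loss lam kx n X Y w (f + t *\<^sub>R d)) has_real_derivative
      (1 / real (n+1)) * ((\<Sum>i=1..n. L (Y i) (f \<bullet> kx (X i)) * (d \<bullet> kx (X i)))
        + L w (f \<bullet> kx (X (n+1))) * (d \<bullet> kx (X (n+1)))) + lam * (2 * (f \<bullet> d))) (at 0)"
proof -
  have loss_along_line: "((\<lambda>t. loss y' ((f + t *\<^sub>R d) \<bullet> x)) has_real_derivative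
      L y' (f \<bullet> x) * (d \<bullet> x)) (at 0)" if "y' \<in> insert w (Y ` {1..n})" for y' x
  proof -
    have "((\<lambda>t. (f + t *\<^sub>R d) \<bullet> x) has_real_derivative d \<bullet> x) (at 0)"
      by (auto intro!: derivative_eq_intros simp: inner_add_left)
    from DERIV_chain2[OF deriv[OF that] this] show ?thesis
      by simp
  qed
  have norm_along_line: "((\<lambda>t. (norm (f + t *\<^sub>R d))\<^sup>2) has_real_derivative 2 * (f \<bullet> d)) (at 0)"
  proof -
    have "(norm (f + t *\<^sub>R d))\<^sup>2 = f \<bullet> f + 2 * t * (f \<bullet> d) + t\<^sup>2 * (d \<bullet> d)" for t
      unfolding power2_norm_eq_inner
      by (simp add: inner_add_left inner_add_right inner_commute algebra_simps power2_eq_square)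
    then show ?thesis
      by (auto intro!: derivative_eq_intros)
  qed
  show ?thesis
    unfolding reg_risk_def rkhs_eval_def
    by (intro DERIV_add DERIV_cmult DERIV_sum loss_along_line norm_along_line) auto
qed

lemma reg_risk_minimizer_first_order:
  fixes kx :: "'x \<Rightarrow> 'h::real_inner"
  assumes "is_minimizer (reg_risk loss lam kx n X Y w) f"
    and "\<And>y' u. y' \<in> insert w (Y ` {1..n}) \<Longrightarrow> (loss y' has_real_derivative L y' u) (at u)"
  shows "(\<Sum>i=1..n. L (Y i) (f \<bullet> kx (X i)) * (d \<bullet> kx (X i)))
      + L w (f \<bullet> kx (X (n+1))) * (d \<bullet> kx (X (n+1))) + 2 * lam * real (n+1) * (f \<bullet> d) = 0"
  using is_minimizer_directional_derivative_eq_0[OF assms(1) reg_risk_directional_derivative[OF assms(2)]]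
  by (simp add: field_simps)

lemma reg_risk_minimizers_label_change:
  fixes kx :: "'x \<Rightarrow> 'h::real_inner"
  assumes labels: "\<forall>i\<in>{1..n}. Y i \<in> Ys" "y \<in> Ys" "z \<in> Ys"
    and convex: "\<forall>y'\<in>Ys. convex_on UNIV (loss y')"
    and deriv: "\<And>y' u. y' \<in> Ys \<Longrightarrow> (loss y' has_real_derivative L y' u) (at u)"
    and fy: "is_minimizer (reg_risk loss lam kx n X Y y) fy"
    and fz: "is_minimizer (reg_risk loss lam kx n X Y z) fz"
  shows "2 * lam * real (n+1) * (norm (fy - fz))\<^sup>2
      \<le> (L z (fz \<bullet> kx (X (n+1))) - L y (fz \<bullet> kx (X (n+1)))) * ((fy - fz) \<bullet> kx (X (n+1)))"
proof -
  define d where "d = fy - fz"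
  define k where "k = kx (X (n+1))"
  define N where "N = real (n+1)"
  have monotone: "(L w (fy \<bullet> x) - L w (fz \<bullet> x)) * (d \<bullet> x) \<ge> 0" if "w \<in> Ys" for w x
    using convex_on_derivative_monotone[OF bspec[OF convex that] deriv[OF that]]
    by (simp add: d_def inner_diff_left)
  have foc_y: "(\<Sum>i=1..n. L (Y i) (fy \<bullet> kx (X i)) * (d \<bullet> kx (X i)))
      + L y (fy \<bullet> k) * (d \<bullet> k) + 2 * lam * N * (fy \<bullet> d) = 0"
    unfolding k_def N_def by (rule reg_risk_minimizer_first_order[OF fy]) (use labels deriv in auto)
  have foc_z: "(\<Sum>i=1..n. L (Y i) (fz \<bullet> kx (X i)) * (d \<bullet> kx (X i)))
      + L z (fz \<bullet> k) * (d \<bullet> k) + 2 * lam * N * (fz \<bullet> d) = 0"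
    unfolding k_def N_def by (rule reg_risk_minimizer_first_order[OF fz]) (use labels deriv in auto)
  define M where "M = (\<Sum>i=1..n. (L (Y i) (fy \<bullet> kx (X i)) - L (Y i) (fz \<bullet> kx (X i))) * (d \<bullet> kx (X i)))
      + (L y (fy \<bullet> k) - L y (fz \<bullet> k)) * (d \<bullet> k)"
  have "M \<ge> 0"
    unfolding M_def using labels by (intro add_nonneg_nonneg sum_nonneg monotone) auto
  moreover have "M + 2 * lam * N * (norm d)\<^sup>2 = (L z (fz \<bullet> k) - L y (fz \<bullet> k)) * (d \<bullet> k)"
  proof -
    have "2 * lam * N * (norm d)\<^sup>2 = 2 * lam * N * (fy \<bullet> d) - 2 * lam * N * (fz \<bullet> d)"
      by (simp add: d_def power2_norm_eq_inner inner_diff_left algebra_simps)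
    moreover have "M = (\<Sum>i=1..n. L (Y i) (fy \<bullet> kx (X i)) * (d \<bullet> kx (X i)))
        - (\<Sum>i=1..n. L (Y i) (fz \<bullet> kx (X i)) * (d \<bullet> kx (X i)))
        + (L y (fy \<bullet> k) - L y (fz \<bullet> k)) * (d \<bullet> k)"
      by (simp add: M_def sum_subtractf left_diff_distrib)
    ultimately show ?thesis
      using foc_y foc_z by (simp add: algebra_simps)
  qed
  ultimately show ?thesis
    unfolding d_def k_def N_def by linarith
qed

lemma reg_risk_minimizers_dist_le:
  fixes kx :: "'x \<Rightarrow> 'h::real_inner"
  assumes lam: "lam > 0"
    and labels: "\<forall>i\<in>{1..n}. Y i \<in> Ys" "y \<in> Ys" "z \<in> Ys"
    and convex: "\<forall>y'\<in>Ys. convex_on UNIV (loss y')"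
    and deriv: "\<And>y' u. y' \<in> Ys \<Longrightarrow> (loss y' has_real_derivative L y' u) (at u)"
    and fy: "is_minimizer (reg_risk loss lam kx n X Y y) fy"
    and fz: "is_minimizer (reg_risk loss lam kx n X Y z) fz"
  shows "norm (fy - fz) \<le> \<bar>L z (fz \<bullet> kx (X (n+1))) - L y (fz \<bullet> kx (X (n+1)))\<bar>
      * norm (kx (X (n+1))) / (2 * lam * real (n+1))"
proof -
  define d where "d = fy - fz"
  define k where "k = kx (X (n+1))"
  define c where "c = L z (fz \<bullet> k) - L y (fz \<bullet> k)"
  define a where "a = 2 * lam * real (n+1)"
  have a: "a > 0"
    using lam by (simp add: a_def)
  have "a * (norm d)\<^sup>2 \<le> c * (d \<bullet> k)"
    unfolding a_def c_def d_def k_def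
    by (rule reg_risk_minimizers_label_change[OF labels convex deriv fy fz])
  also have "\<dots> \<le> \<bar>c\<bar> * \<bar>d \<bullet> k\<bar>"
    by (simp add: abs_mult[symmetric])
  also have "\<dots> \<le> \<bar>c\<bar> * (norm d * norm k)"
    by (intro mult_left_mono Cauchy_Schwarz_ineq2) simp
  finally have "(a * norm d) * norm d \<le> (\<bar>c\<bar> * norm k) * norm d"
    by (simp add: power2_eq_square algebra_simps)
  then have "a * norm d \<le> \<bar>c\<bar> * norm k"
    by (cases "norm d = 0") (use a in auto)
  then show ?thesis
    using a by (simp add: pos_le_divide_eq mult.commute a_def c_def d_def k_def)
qed

lemma lipschitz_on_inner_diff_le:
  fixes f g x :: "'a::real_inner"
  assumes "C-lipschitz_on UNIV h"
  shows "\<bar>h (f \<bullet> x) - h (g \<bullet> x)\<bar> \<le> C * (norm (f - g) * norm x)"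
proof -
  have "\<bar>h (f \<bullet> x) - h (g \<bullet> x)\<bar> \<le> C * \<bar>f \<bullet> x - g \<bullet> x\<bar>"
    using lipschitz_onD[OF assms] by (simp add: dist_real_def)
  also have "\<dots> \<le> C * (norm (f - g) * norm x)"
    using lipschitz_on_nonneg[OF assms] Cauchy_Schwarz_ineq2[of "f - g" x]
    by (intro mult_left_mono) (auto simp: inner_diff_left)
  finally show ?thesis .
qed

theorem theorem13:
  fixes Xs :: "(real ^ 'd) set" and Ys :: "real set"
    and X :: "nat \<Rightarrow> real ^ 'd" and Y :: "nat \<Rightarrow> real" and n :: nat
    and kx :: "real ^ 'd \<Rightarrow> 'h::{real_inner,complete_space}"
    and loss :: "real \<Rightarrow> real \<Rightarrow> real" and s :: "real \<Rightarrow> real \<Rightarrow> real"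
    and lam \<gamma> z y :: real and fy fz :: 'h
  assumes H: "rkhs_feature Xs kx"
    and data: "\<forall>i\<in>{1..n+1}. X i \<in> Xs" "\<forall>i\<in>{1..n}. Y i \<in> Ys"
    and lam: "lam > 0"
    and s_nonneg: "\<forall>a b. s a b \<ge> 0"
    and loss_convex: "\<forall>y'\<in>Ys. convex_on UNIV (loss y')"
    and loss_C2: "\<forall>y'\<in>Ys. C2 (loss y')"
    and gam: "\<gamma> > 0"
    and s_lip: "\<forall>y'\<in>Ys. \<gamma>-lipschitz_on UNIV (s y')"
    and z: "z \<in> Ys" and y: "y \<in> Ys"
    and fy: "is_minimizer (reg_risk loss lam kx n X Y y) fy"
    and fz: "is_minimizer (reg_risk loss lam kx n X Y z) fz"
  shows
    "let \<rho> = (1/2) * \<bar>- d2 loss z (rkhs_eval kx fz (X (n+1))) + d2 loss y (rkhs_eval kx fz (X (n+1)))\<bar>;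
         \<tau> = (\<lambda>i. sqrt (kern kx (X i) (X i)) * sqrt (kern kx (X (n+1)) (X (n+1)))
                   * (\<gamma> * \<rho>) / (lam * real (n+1)))
     in (\<forall>i\<in>{1..n}. \<bar>s (Y i) (rkhs_eval kx fy (X i)) - s (Y i) (rkhs_eval kx fz (X i))\<bar> \<le> \<tau> i)
        \<and> \<bar>s y (rkhs_eval kx fy (X (n+1))) - s y (rkhs_eval kx fz (X (n+1)))\<bar> \<le> \<tau> (n+1)"
proof -
  define k where "k = kx (X (n+1))"
  define \<rho> where "\<rho> = (1/2) * \<bar>- d2 loss z (fz \<bullet> k) + d2 loss y (fz \<bullet> k)\<bar>"
  have "norm (fy - fz) \<le> \<bar>d2 loss z (fz \<bullet> k) - d2 loss y (fz \<bullet> k)\<bar> * norm k / (2 * lam * real (n+1))"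
    unfolding k_def
    by (rule reg_risk_minimizers_dist_le[OF lam data(2) y z loss_convex _ fy fz])
      (use loss_C2 C2_has_real_derivative_d2 in blast)
  then have dist: "norm (fy - fz) \<le> \<rho> * norm k / (lam * real (n+1))"
    by (simp add: \<rho>_def abs_minus_commute)
  have bound: "\<bar>s w (fy \<bullet> kx x) - s w (fz \<bullet> kx x)\<bar> \<le> norm (kx x) * norm k * (\<gamma> * \<rho>) / (lam * real (n+1))"
    if "w \<in> Ys" for w x
  proof -
    have "\<bar>s w (fy \<bullet> kx x) - s w (fz \<bullet> kx x)\<bar> \<le> \<gamma> * (norm (fy - fz) * norm (kx x))"
      using lipschitz_on_inner_diff_le s_lip that by blast
    also have "\<dots> \<le> \<gamma> * (\<rho> * norm k / (lam * real (n+1)) * norm (kx x))"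
      using dist gam by (intro mult_left_mono mult_right_mono) auto
    finally show ?thesis
      by (simp add: field_simps)
  qed
  have "sqrt (kern kx x x) = norm (kx x)" for x
    by (simp add: kern_def norm_eq_sqrt_inner)
  then show ?thesis
    using bound data(2) y unfolding Let_def rkhs_eval_def \<rho>_def k_def by auto
qed

end
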